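(* Let $\lambda_1>\lambda_2>\dots>\lambda_n$ be integers (a regular dominant integral weight $\lambda$). A vertex $v$ of the Gelfand–Tsetlin polytope $GT_\lambda$ is simplicial if and only if the graph $\Gamma_v$ is acyclic.
   Context: $GT_\lambda$ is the polytope in $\mathbb R^{n(n+1)/2}$, with coordinates $A_{i,j}$ for $0\le i\le n-1$, $1\le j\le n-i$, defined by $A_{0,j}=\lambda_j$ and $A_{i,j}\ge A_{i+1,j}\ge A_{i,j+1}$ for all $0\le i\le n-2$, $1\le j\le n-i-1$. A vertex of a polytope $P$ is simplicial if it lies on exactly $\dim P$ facets. Let $T$ be the graph with node set $\{(i,j):0\le i\le n-1,\ 1\le j\le n-i\}$ in which, for every $1\le i\le n-1$, $1\le j\le n-i$, the node $(i,j)$ is adjacent to $(i-1,j)$ and to $(i-1,j+1)$ (and there are no other edges). For a vertex $v$ of $GT_\lambda$, $\Gamma_v$ is the spanning subgraph of $T$ (containing all nodes of $T$) whose edges are exactly those edges of $T$ whose two endpoints $(i,j),(i',j')$ satisfy $v_{i,j}=v_{i',j'}$. *)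

theory Defs
  imports Complex_Main
begin

text \<open>Points of R^{n(n+1)/2} are functions A :: nat => nat => real, with A i j the
coordinate A_{i,j}; they are required to vanish outside the index set.\<close>

definition gt_idx :: "nat \<Rightarrow> (nat \<times> nat) set" where
  "gt_idx n = {(i, j). i < n \<and> 1 \<le> j \<and> j \<le> n - i}"

definition gt_space :: "nat \<Rightarrow> (nat \<Rightarrow> nat \<Rightarrow> real) set" where
  "gt_space n = {A. \<forall>i j. (i, j) \<notin> gt_idx n \<longrightarrow> A i j = 0}"

definition GT :: "nat \<Rightarrow> (nat \<Rightarrow> int) \<Rightarrow> (nat \<Rightarrow> nat \<Rightarrow> real) set" where
  "GT n lam = {A. A \<in> gt_space n
      \<and> (\<forall>j. 1 \<le> j \<and> j \<le> n \<longrightarrow> A 0 j = real_of_int (lam j))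
      \<and> (\<forall>i j. i + 2 \<le> n \<and> 1 \<le> j \<and> j \<le> n - i - 1 \<longrightarrow>
             A i j \<ge> A (i + 1) j \<and> A (i + 1) j \<ge> A i (j + 1))}"

definition aff_indep_pts :: "(nat \<Rightarrow> nat \<Rightarrow> real) set \<Rightarrow> bool" where
  "aff_indep_pts S \<longleftrightarrow> finite S \<and>
     (\<forall>c. (\<Sum>s\<in>S. c s) = 0 \<and> (\<forall>i j. (\<Sum>s\<in>S. c s * s i j) = 0) \<longrightarrow> (\<forall>s\<in>S. c s = 0))"

definition pdim :: "(nat \<Rightarrow> nat \<Rightarrow> real) set \<Rightarrow> int" where
  "pdim P = (if P = {} then -1
             else int (Max {card S | S. S \<subseteq> P \<and> S \<noteq> {} \<and> aff_indep_pts S}) - 1)"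

definition face_gt :: "nat \<Rightarrow> (nat \<Rightarrow> nat \<Rightarrow> real) set \<Rightarrow> (nat \<Rightarrow> nat \<Rightarrow> real) set \<Rightarrow> bool" where
  "face_gt n P F \<longleftrightarrow> (\<exists>a b. (\<forall>x\<in>P. (\<Sum>(i, j)\<in>gt_idx n. a i j * x i j) \<le> b) \<and>
        F = {x\<in>P. (\<Sum>(i, j)\<in>gt_idx n. a i j * x i j) = b})"

definition facet_gt :: "nat \<Rightarrow> (nat \<Rightarrow> nat \<Rightarrow> real) set \<Rightarrow> (nat \<Rightarrow> nat \<Rightarrow> real) set \<Rightarrow> bool" where
  "facet_gt n P F \<longleftrightarrow> face_gt n P F \<and> pdim F = pdim P - 1"

definition is_vertex :: "(nat \<Rightarrow> nat \<Rightarrow> real) set \<Rightarrow> (nat \<Rightarrow> nat \<Rightarrow> real) \<Rightarrow> bool" where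
  "is_vertex P v \<longleftrightarrow> v \<in> P \<and>
     (\<forall>x\<in>P. \<forall>y\<in>P. \<forall>t::real. 0 < t \<and> t < 1 \<and> v = (\<lambda>i j. (1 - t) * x i j + t * y i j) \<longrightarrow> x = y)"

definition simplicial_vertex :: "nat \<Rightarrow> (nat \<Rightarrow> nat \<Rightarrow> real) set \<Rightarrow> (nat \<Rightarrow> nat \<Rightarrow> real) \<Rightarrow> bool" where
  "simplicial_vertex n P v \<longleftrightarrow> is_vertex P v \<and>
     int (card {F. facet_gt n P F \<and> v \<in> F}) = pdim P"

definition T_edge :: "nat \<Rightarrow> nat \<times> nat \<Rightarrow> nat \<times> nat \<Rightarrow> bool" where
  "T_edge n p q \<longleftrightarrow> p \<in> gt_idx n \<and> q \<in> gt_idx n \<and>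
     ((1 \<le> fst p \<and> (q = (fst p - 1, snd p) \<or> q = (fst p - 1, snd p + 1))) \<or>
      (1 \<le> fst q \<and> (p = (fst q - 1, snd q) \<or> p = (fst q - 1, snd q + 1))))"

definition Gamma_edge :: "nat \<Rightarrow> (nat \<Rightarrow> nat \<Rightarrow> real) \<Rightarrow> nat \<times> nat \<Rightarrow> nat \<times> nat \<Rightarrow> bool" where
  "Gamma_edge n v p q \<longleftrightarrow> T_edge n p q \<and> v (fst p) (snd p) = v (fst q) (snd q)"

definition is_cycle :: "('a \<Rightarrow> 'a \<Rightarrow> bool) \<Rightarrow> 'a set \<Rightarrow> 'a list \<Rightarrow> bool" where
  "is_cycle E V cs \<longleftrightarrow> length cs \<ge> 3 \<and> distinct cs \<and> set cs \<subseteq> V \<and>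
     (\<forall>k < length cs. E (cs ! k) (cs ! ((k + 1) mod length cs)))"

definition acyclic_graph :: "('a \<Rightarrow> 'a \<Rightarrow> bool) \<Rightarrow> 'a set \<Rightarrow> bool" where
  "acyclic_graph E V \<longleftrightarrow> \<not> (\<exists>cs. is_cycle E V cs)"

end

theory Submission
  imports Defs "HOL-Library.Transitive_Closure_Table"
begin

text \<open>For a regular weight the polytope \<open>GT\<^sub>\<lambda>\<close> has the dimension of its non-top-row
  coordinates, and each defining inequality \<open>x\<^sub>q \<le> x\<^sub>p\<close> (one for every edge of \<open>T\<close>) cuts out a
  facet of its own: perturbing a point at which only that inequality is tight gives enough affinely
  independent points, while a facet contained in none of these sets would contain a point at which
  no inequality is tight and hence be all of \<open>GT\<^sub>\<lambda>\<close>. So the facets through \<open>v\<close> correspond to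
  the edges of \<open>\<Gamma>\<^sub>v\<close>. At a vertex \<open>v\<close> every component of \<open>\<Gamma>\<^sub>v\<close> meets the top row (a component
  avoiding it could be shifted up and down inside \<open>GT\<^sub>\<lambda>\<close>), and in exactly one node, because the
  \<open>\<lambda>\<^sub>j\<close> are distinct. A graph whose components contain exactly one root each is a forest iff it
  has as many edges as non-root nodes, and that number is \<open>dim GT\<^sub>\<lambda>\<close>.\<close>

section \<open>Cycles and spanning forests\<close>

lemma is_cycle_neighbours:
  assumes cyc: "is_cycle E V cs" and sym: "\<And>x y. E x y \<Longrightarrow> E y x" and x: "x \<in> set cs"
  obtains y z where "y \<in> set cs" "z \<in> set cs" "y \<noteq> z" "E x y" "E x z"
proof -
  define L where "L = length cs"
  have L3: "3 \<le> L" and dist: "distinct cs" and edge: "\<And>k. k < L \<Longrightarrow> E (cs ! k) (cs ! ((k + 1) mod L))"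
    using cyc unfolding is_cycle_def L_def by auto
  obtain m where m: "m < L" "cs ! m = x" using x unfolding L_def by (auto simp: in_set_conv_nth)
  define k where "k = (if m = 0 then L - 1 else m - 1)"
  have k: "k < L" "(k + 1) mod L = m" using m L3 unfolding k_def by auto
  define j where "j = (m + 1) mod L"
  have j: "j < L" "j \<noteq> k" using m L3 unfolding j_def k_def by (auto simp: mod_if)
  then have "cs ! j \<noteq> cs ! k" using dist k(1) unfolding L_def by (simp add: nth_eq_iff_index_eq)
  moreover have "E x (cs ! j)" "E x (cs ! k)"
    using edge[OF m(1)] edge[OF k(1)] sym m(2) k(2) unfolding j_def by auto
  moreover have "cs ! j \<in> set cs" "cs ! k \<in> set cs" using j(1) k(1) unfolding L_def by auto
  ultimately show thesis using that by blast
qed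

lemma is_cycle_of_path:
  assumes walk: "rtrancl_path E u xs v" and dist: "distinct (u # xs)" and closing: "E v u"
    and len: "2 \<le> length xs" and V: "set (u # xs) \<subseteq> V"
  shows "is_cycle E V (u # xs)"
  unfolding is_cycle_def
proof (intro conjI allI impI)
  fix k assume k: "k < length (u # xs)"
  show "E ((u # xs) ! k) ((u # xs) ! ((k + 1) mod length (u # xs)))"
  proof (cases "k < length xs")
    case True
    then show ?thesis using rtrancl_path_nth[OF walk True] by simp
  next
    case False
    then have "k = length xs" using k by simp
    moreover have "(u # xs) ! length xs = v"
    proof -
      have "xs \<noteq> []" using len by auto
      then show ?thesis using rtrancl_path_last[OF walk] last_conv_nth[of xs] by (cases xs) auto
    qed
    ultimately show ?thesis using closing by simp
  qed
qed (use dist len V in auto)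

text \<open>Every component contains exactly one root. Joining each non-root to a neighbour closer to
  the roots gives a spanning forest with \<open>card V - card R\<close> edges.\<close>
locale rooted_graph =
  fixes E :: "'a \<Rightarrow> 'a \<Rightarrow> bool" and V R :: "'a set"
  assumes finite_V: "finite V" and roots_subset: "R \<subseteq> V"
    and edge_sym: "\<And>x y. E x y \<Longrightarrow> E y x" and edge_in: "\<And>x y. E x y \<Longrightarrow> x \<in> V \<and> y \<in> V"
    and edge_irrefl: "\<And>x. \<not> E x x"
    and reaches_root: "\<And>x. x \<in> V \<Longrightarrow> \<exists>r\<in>R. E\<^sup>*\<^sup>* x r"
    and roots_disconnected: "\<And>r r'. r \<in> R \<Longrightarrow> r' \<in> R \<Longrightarrow> E\<^sup>*\<^sup>* r r' \<Longrightarrow> r = r'"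
begin

definition depth :: "'a \<Rightarrow> nat" where
  "depth x = (LEAST k. \<exists>r\<in>R. (E ^^ k) x r)"

lemma depth_witness: "x \<in> V \<Longrightarrow> \<exists>r\<in>R. (E ^^ depth x) x r"
proof -
  assume "x \<in> V"
  then obtain r where r: "r \<in> R" "E\<^sup>*\<^sup>* x r" using reaches_root by blast
  then obtain k where "(E ^^ k) x r" using rtranclp_imp_relpowp by metis
  then have "\<exists>k. \<exists>r\<in>R. (E ^^ k) x r" using r(1) by blast
  then show ?thesis unfolding depth_def by (rule LeastI_ex)
qed

lemma depth_le: "(E ^^ k) x r \<Longrightarrow> r \<in> R \<Longrightarrow> depth x \<le> k"
  unfolding depth_def by (rule Least_le) (rule bexI)

lemma depth_edge: "E x y \<Longrightarrow> depth x \<le> Suc (depth y)"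
proof -
  assume xy: "E x y"
  obtain r where "r \<in> R" "(E ^^ depth y) y r" using depth_witness edge_in[OF xy] by blast
  then show ?thesis using xy by (meson depth_le relpowp_Suc_I2)
qed

lemma ex_parent: "x \<in> V - R \<Longrightarrow> \<exists>y. E x y \<and> Suc (depth y) = depth x"
proof -
  assume x: "x \<in> V - R"
  then obtain r where r: "r \<in> R" "(E ^^ depth x) x r" using depth_witness by blast
  then obtain m where m: "depth x = Suc m" using x by (cases "depth x") auto
  then obtain y where y: "E x y" "(E ^^ m) y r" using r relpowp_Suc_D2 by metis
  have "depth y \<le> m" using depth_le y r by blast
  then show ?thesis using y m depth_edge[OF y(1)] by (intro exI[of _ y]) simp
qed

definition parent :: "'a \<Rightarrow> 'a" where
  "parent x = (SOME y. E x y \<and> Suc (depth y) = depth x)"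

lemma parent_step: "x \<in> V - R \<Longrightarrow> E x (parent x) \<and> Suc (depth (parent x)) = depth x"
  unfolding parent_def using ex_parent by (rule someI_ex)

definition edges :: "'a set set" where
  "edges = {{x, y} | x y. E x y}"

definition parent_edges :: "'a set set" where
  "parent_edges = (\<lambda>x. {x, parent x}) ` (V - R)"

lemma parent_edges_subset: "parent_edges \<subseteq> edges"
  unfolding parent_edges_def edges_def using parent_step by blast

lemma finite_edges: "finite edges"
proof -
  have "edges \<subseteq> Pow V" unfolding edges_def using edge_in by blast
  then show ?thesis using finite_V by (meson finite_Pow_iff finite_subset)
qed

lemma card_parent_edges: "card parent_edges = card V - card R"
proof -
  have "inj_on (\<lambda>x. {x, parent x}) (V - R)"
  proof (rule inj_onI)
    fix x y assume x: "x \<in> V - R" and y: "y \<in> V - R" and eq: "{x, parent x} = {y, parent y}"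
    show "x = y"
    proof (rule ccontr)
      assume "x \<noteq> y"
      then have "x = parent y" "y = parent x" using eq by (auto simp: doubleton_eq_iff)
      then show False using parent_step[OF x] parent_step[OF y] by simp
    qed
  qed
  then have "card parent_edges = card (V - R)" unfolding parent_edges_def by (simp add: card_image)
  also have "\<dots> = card V - card R" using finite_V roots_subset by (meson card_Diff_subset finite_subset)
  finally show ?thesis .
qed

lemma parent_eqI:
  assumes "E x y" "depth y \<le> depth x" "{x, y} \<in> parent_edges"
  shows "parent x = y"
proof -
  obtain z where z: "z \<in> V - R" "{x, y} = {z, parent z}" using assms(3) unfolding parent_edges_def by blast
  have "x \<noteq> y" using assms(1) edge_irrefl by metis
  then consider "z = x" "parent z = y" | "z = y" "parent z = x" using z(2) by (auto simp: doubleton_eq_iff)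
  then show ?thesis
  proof cases
    case 2 then show ?thesis using parent_step[OF z(1)] assms(2) by simp
  qed simp
qed

text \<open>The deepest node of a cycle would have both of its cycle neighbours as parent.\<close>
lemma cycle_imp_parent_edges_ne:
  assumes "is_cycle E V cs" shows "parent_edges \<noteq> edges"
proof
  assume all_parent: "parent_edges = edges"
  have "cs \<noteq> []" using assms unfolding is_cycle_def by auto
  define M where "M = Max (depth ` set cs)"
  have "M \<in> depth ` set cs" unfolding M_def using \<open>cs \<noteq> []\<close> by (intro Max_in) auto
  then obtain x where x: "x \<in> set cs" "depth x = M" by blast
  have highest: "depth y \<le> depth x" if "y \<in> set cs" for y
    using that x(2) unfolding M_def by simp
  obtain y z where yz: "y \<in> set cs" "z \<in> set cs" "y \<noteq> z" "E x y" "E x z"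
    using is_cycle_neighbours[OF assms edge_sym x(1)] by blast
  have "{x, y} \<in> parent_edges" "{x, z} \<in> parent_edges"
    using yz(4,5) unfolding all_parent edges_def by blast+
  then have "parent x = y" "parent x = z"
    using parent_eqI highest yz by blast+
  then show False using \<open>y \<noteq> z\<close> by simp
qed

lemma parent_chain_to_root:
  "x \<in> V \<Longrightarrow> \<exists>r\<in>R. (\<lambda>x y. x \<in> V - R \<and> y = parent x)\<^sup>*\<^sup>* x r"
proof (induction "depth x" arbitrary: x rule: less_induct)
  case less
  show ?case
  proof (cases "x \<in> R")
    case False
    then have x: "x \<in> V - R" using less.prems by blast
    have "parent x \<in> V" "depth (parent x) < depth x" using parent_step[OF x] edge_in by auto
    then obtain r where "r \<in> R" "(\<lambda>x y. x \<in> V - R \<and> y = parent x)\<^sup>*\<^sup>* (parent x) r"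
      using less.hyps by blast
    then show ?thesis using x by (blast intro: converse_rtranclp_into_rtranclp)
  qed blast
qed

lemma cycle_through_edge:
  assumes uv: "E u v" and avoiding: "(\<lambda>x y. E x y \<and> {x, y} \<noteq> {u, v})\<^sup>*\<^sup>* u v"
  shows "\<exists>cs. is_cycle E V cs"
proof -
  define E' where "E' = (\<lambda>x y. E x y \<and> {x, y} \<noteq> {u, v})"
  obtain xs where walk: "rtrancl_path E' u xs v" "distinct (u # xs)"
    using avoiding unfolding E'_def[symmetric] by (metis rtranclp_eq_rtrancl_path rtrancl_path_distinct)
  have "u \<noteq> v" using uv edge_irrefl by metis
  have "\<not> E' u v" unfolding E'_def by simp
  have "xs \<noteq> []" using walk(1) \<open>u \<noteq> v\<close> by (auto elim: rtrancl_path.cases)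
  moreover have "xs \<noteq> [v]" using rtrancl_path_nth[OF walk(1), of 0] \<open>\<not> E' u v\<close> by auto
  ultimately have "2 \<le> length xs" using rtrancl_path_last[OF walk(1)] by (cases xs; cases "tl xs") auto
  moreover have walk_E: "rtrancl_path E u xs v"
    using walk(1) by (rule rtrancl_path_mono) (simp only: E'_def)
  moreover have "set (u # xs) \<subseteq> V"
  proof
    fix z assume "z \<in> set (u # xs)"
    then have "z = u \<or> Rangep E z" using rtrancl_path_Range[OF walk_E] by auto
    then show "z \<in> V" using edge_in[OF uv] edge_in by (auto elim: Rangep.cases)
  qed
  ultimately show ?thesis using is_cycle_of_path[OF walk_E walk(2) edge_sym[OF uv]] by blast
qed

text \<open>A non-parent edge \<open>uv\<close> closes a cycle with the parent chains from \<open>u\<close> and \<open>v\<close>, which end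
  in the same root.\<close>
lemma acyclic_imp_edges_subset:
  assumes acyc: "acyclic_graph E V" shows "edges \<subseteq> parent_edges"
proof
  fix e assume "e \<in> edges"
  then obtain u v where e: "e = {u, v}" "E u v" unfolding edges_def by blast
  show "e \<in> parent_edges"
  proof (rule ccontr)
    assume non_parent: "e \<notin> parent_edges"
    define E' where "E' = (\<lambda>x y. E x y \<and> {x, y} \<noteq> {u, v})"
    define P where "P = (\<lambda>x y. x \<in> V - R \<and> y = parent x)"
    have P_E': "P \<le> E'"
    proof (intro predicate2I)
      fix x y assume "P x y"
      then have "{x, y} \<in> parent_edges" "E x y" using parent_step unfolding P_def parent_edges_def by auto
      moreover have "{x, y} \<noteq> {u, v}" using calculation(1) non_parent e(1) by metis
      ultimately show "E' x y" unfolding E'_def by blast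
    qed
    have E'_sym: "symp E'" unfolding E'_def symp_def using edge_sym insert_commute by metis
    have E'_E: "E' \<le> E" unfolding E'_def by auto
    have uv: "u \<in> V" "v \<in> V" using edge_in[OF e(2)] by auto
    obtain r1 r2 where r: "r1 \<in> R" "r2 \<in> R" "P\<^sup>*\<^sup>* u r1" "P\<^sup>*\<^sup>* v r2"
      using parent_chain_to_root[OF uv(1)] parent_chain_to_root[OF uv(2)] unfolding P_def by blast
    have u_r1: "E'\<^sup>*\<^sup>* u r1" using predicate2D[OF rtranclp_mono[OF P_E'] r(3)] .
    have r2_v: "E'\<^sup>*\<^sup>* r2 v"
      using sympD[OF symp_rtranclp[OF E'_sym] predicate2D[OF rtranclp_mono[OF P_E'] r(4)]] .
    have "E\<^sup>*\<^sup>* r1 u" using predicate2D[OF rtranclp_mono[OF E'_E] sympD[OF symp_rtranclp[OF E'_sym] u_r1]] .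
    moreover have "E\<^sup>*\<^sup>* v r2" using predicate2D[OF rtranclp_mono[OF E'_E] sympD[OF symp_rtranclp[OF E'_sym] r2_v]] .
    ultimately have "E\<^sup>*\<^sup>* r1 r2" using e(2) by (meson rtranclp.rtrancl_into_rtrancl rtranclp_trans)
    then have "r1 = r2" using roots_disconnected r(1,2) by blast
    then have "E'\<^sup>*\<^sup>* u v" using u_r1 r2_v by simp
    then show False using cycle_through_edge[OF e(2)] acyc unfolding E'_def acyclic_graph_def by blast
  qed
qed

lemma acyclic_iff_card_edges: "acyclic_graph E V \<longleftrightarrow> card edges = card V - card R"
proof
  assume "acyclic_graph E V"
  then have "edges = parent_edges" using acyclic_imp_edges_subset parent_edges_subset by blast
  then show "card edges = card V - card R" using card_parent_edges by simp
next
  assume card_eq: "card edges = card V - card R"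
  show "acyclic_graph E V" unfolding acyclic_graph_def
  proof
    assume "\<exists>cs. is_cycle E V cs"
    then have "parent_edges \<subset> edges" using cycle_imp_parent_edges_ne parent_edges_subset by blast
    then have "card parent_edges < card edges" using finite_edges psubset_card_mono by blast
    then show False using card_eq card_parent_edges by simp
  qed
qed

end

section \<open>Affine independence and dimension\<close>

text \<open>One step of Gaussian elimination: a solution of the system with the unknown \<open>s\<^sub>0\<close> eliminated
  by means of equation \<open>k\<close> extends to a solution of the full system.\<close>
lemma elimination_step:
  fixes w :: "'a \<Rightarrow> 'b \<Rightarrow> real"
  assumes S: "finite S" "s0 \<in> S" and pivot: "w s0 k \<noteq> 0"
    and sol: "\<forall>j\<in>K. (\<Sum>s\<in>S - {s0}. c s * (w s j - w s k / w s0 k * w s0 j)) = 0"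
  defines "A \<equiv> \<Sum>s\<in>S - {s0}. c s * w s k"
  shows "\<forall>j\<in>insert k K. (\<Sum>s\<in>S. (c(s0 := - A / w s0 k)) s * w s j) = 0"
proof
  fix j assume j: "j \<in> insert k K"
  have "(\<Sum>s\<in>S. (c(s0 := - A / w s0 k)) s * w s j)
      = - A / w s0 k * w s0 j + (\<Sum>s\<in>S - {s0}. (c(s0 := - A / w s0 k)) s * w s j)"
    using sum.remove[OF S, of "\<lambda>s. (c(s0 := - A / w s0 k)) s * w s j"] by simp
  also have "(\<Sum>s\<in>S - {s0}. (c(s0 := - A / w s0 k)) s * w s j) = (\<Sum>s\<in>S - {s0}. c s * w s j)"
    by (rule sum.cong) auto
  also have "(\<Sum>s\<in>S - {s0}. c s * w s j) = w s0 j / w s0 k * A"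
  proof (cases "j = k")
    case False
    have "(\<Sum>s\<in>S - {s0}. c s * (w s j - w s k / w s0 k * w s0 j))
        = (\<Sum>s\<in>S - {s0}. c s * w s j) - w s0 j / w s0 k * A"
      unfolding assms(5) sum_distrib_left sum_subtractf[symmetric] by (rule sum.cong) (simp_all add: algebra_simps)
    then show ?thesis using sol j False by simp
  qed (use pivot in \<open>simp add: assms(5)\<close>)
  finally show "(\<Sum>s\<in>S. (c(s0 := - A / w s0 k)) s * w s j) = 0" by simp
qed

lemma ex_nontrivial_solution:
  fixes w :: "'a \<Rightarrow> 'b \<Rightarrow> real"
  assumes "finite K" "finite S" "card K < card S"
  shows "\<exists>c. (\<exists>s\<in>S. c s \<noteq> 0) \<and> (\<forall>k\<in>K. (\<Sum>s\<in>S. c s * w s k) = 0)"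
  using assms
proof (induction K arbitrary: S w rule: finite_induct)
  case empty
  then obtain s0 where "s0 \<in> S" by fastforce
  then show ?case by (intro exI[of _ "\<lambda>s. 1"]) auto
next
  case (insert k K)
  show ?case
  proof (cases "\<forall>s\<in>S. w s k = 0")
    case True
    then show ?thesis using insert.IH[of S w] insert.prems insert.hyps by auto
  next
    case False
    then obtain s0 where s0: "s0 \<in> S" "w s0 k \<noteq> 0" by blast
    have "card K < card (S - {s0})" using insert s0(1) by simp
    then obtain c where c: "\<exists>s\<in>S - {s0}. c s \<noteq> 0"
      "\<forall>j\<in>K. (\<Sum>s\<in>S - {s0}. c s * (w s j - w s k / w s0 k * w s0 j)) = 0"
      using insert.IH[of "S - {s0}" "\<lambda>s j. w s j - w s k / w s0 k * w s0 j"] insert.prems by auto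
    have "\<exists>s\<in>S. (c(s0 := - (\<Sum>s\<in>S - {s0}. c s * w s k) / w s0 k)) s \<noteq> 0" using c(1) by auto
    then show ?thesis using elimination_step[OF insert.prems(1) s0 c(2)] by blast
  qed
qed

lemma aff_indep_card_le:
  assumes ai: "aff_indep_pts S" and fK: "finite K"
    and cover: "\<And>i j. (\<exists>a. \<forall>s\<in>S. s i j = a) \<or> (\<exists>k\<in>K. \<forall>s\<in>S. s i j = s (fst k) (snd k))"
  shows "card S \<le> card K + 1"
proof (rule ccontr)
  assume "\<not> card S \<le> card K + 1"
  then have lt: "card (insert None (Some ` K)) < card S" using fK by (simp add: card_image)
  have fS: "finite S" using ai unfolding aff_indep_pts_def by blast
  \<comment> \<open>equation \<open>None\<close> is the affine condition \<open>\<Sum>c = 0\<close>, equation \<open>Some k\<close> reads off coordinate \<open>k\<close>\<close>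
  define w where "w = (\<lambda>(s :: nat \<Rightarrow> nat \<Rightarrow> real) (k :: (nat \<times> nat) option).
    case k of None \<Rightarrow> 1 | Some k \<Rightarrow> s (fst k) (snd k))"
  obtain c where c: "\<exists>s\<in>S. c s \<noteq> 0" "\<forall>k\<in>insert None (Some ` K). (\<Sum>s\<in>S. c s * w s k) = 0"
    using ex_nontrivial_solution[of "insert None (Some ` K)" S w] fK fS lt by auto
  have s0: "(\<Sum>s\<in>S. c s) = 0" using c(2) unfolding w_def by simp
  have sk: "(\<Sum>s\<in>S. c s * s (fst k) (snd k)) = 0" if "k \<in> K" for k
    using c(2) that unfolding w_def by simp
  have "(\<Sum>s\<in>S. c s * s i j) = 0" for i j
  proof -
    from cover[of i j] show ?thesis
    proof
      assume "\<exists>a. \<forall>s\<in>S. s i j = a"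
      then obtain a where a: "\<forall>s\<in>S. s i j = a" by blast
      have "(\<Sum>s\<in>S. c s * s i j) = (\<Sum>s\<in>S. c s) * a" using a by (simp add: sum_distrib_right)
      then show ?thesis using s0 by simp
    next
      assume "\<exists>k\<in>K. \<forall>s\<in>S. s i j = s (fst k) (snd k)"
      then obtain k where k: "k \<in> K" "\<forall>s\<in>S. s i j = s (fst k) (snd k)" by blast
      have "(\<Sum>s\<in>S. c s * s i j) = (\<Sum>s\<in>S. c s * s (fst k) (snd k))" using k(2) by (intro sum.cong) auto
      then show ?thesis using sk[OF k(1)] by simp
    qed
  qed
  then have "\<forall>s\<in>S. c s = 0" using ai s0 unfolding aff_indep_pts_def by blast
  then show False using c(1) by blast
qed

lemma aff_indep_singleton: "aff_indep_pts {x}"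
  unfolding aff_indep_pts_def by simp

lemma aff_indep_perturbation:
  fixes y :: "nat \<Rightarrow> nat \<Rightarrow> real" and d :: "nat \<times> nat \<Rightarrow> nat \<Rightarrow> nat \<Rightarrow> real" and \<delta> :: real
  assumes fK: "finite K"
    and dK: "\<And>k k'. k \<in> K \<Longrightarrow> k' \<in> K \<Longrightarrow> d k (fst k') (snd k') = (if k = k' then 1 else 0)"
    and dn: "\<delta> \<noteq> 0"
    and Pdef: "P = (\<lambda>k i j. y i j + \<delta> * d k i j)"
  shows "aff_indep_pts (insert y (P ` K)) \<and> card (insert y (P ` K)) = card K + 1"
proof -
  have inj: "inj_on P K"
  proof (rule inj_onI)
    fix k k' assume k: "k \<in> K" "k' \<in> K" "P k = P k'"
    then have "P k (fst k) (snd k) = P k' (fst k) (snd k)" by simp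
    then have "d k' (fst k) (snd k) = 1" using dK[of k k] k(1) dn unfolding Pdef by simp
    then show "k = k'" using dK[OF k(2) k(1)] by (simp split: if_splits)
  qed
  have ny: "y \<notin> P ` K"
  proof
    assume "y \<in> P ` K"
    then obtain k where k: "k \<in> K" "y = P k" by blast
    then have "y (fst k) (snd k) = P k (fst k) (snd k)" by simp
    then show False using dK[OF k(1) k(1)] dn unfolding Pdef by simp
  qed
  have card: "card (insert y (P ` K)) = card K + 1"
    using ny inj fK by (simp add: card_image)
  have fin: "finite (insert y (P ` K))" using fK by simp
  have sumS: "(\<Sum>s\<in>insert y (P ` K). f s) = f y + (\<Sum>k\<in>K. f (P k))" for f :: "_ \<Rightarrow> real"
    using ny inj fK by (simp add: sum.reindex)
  have ai: "\<forall>s\<in>insert y (P ` K). c s = 0"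
    if c0: "(\<Sum>s\<in>insert y (P ` K). c s) = 0" and c1: "\<forall>i j. (\<Sum>s\<in>insert y (P ` K). c s * s i j) = 0" for c
  proof -
    have s0: "c y + (\<Sum>k\<in>K. c (P k)) = 0" using c0 sumS[of c] by simp
    have ck: "c (P k0) = 0" if k0: "k0 \<in> K" for k0
    proof -
      define i where "i = fst k0" define j where "j = snd k0"
      have "0 = (\<Sum>s\<in>insert y (P ` K). c s * s i j)" using c1 by simp
      also have "\<dots> = c y * y i j + (\<Sum>k\<in>K. c (P k) * P k i j)" using sumS[of "\<lambda>s. c s * s i j"] by simp
      also have "(\<Sum>k\<in>K. c (P k) * P k i j) = (\<Sum>k\<in>K. c (P k) * y i j + (if k = k0 then \<delta> * c (P k) else 0))"
        unfolding Pdef i_def j_def using dK k0 by (intro sum.cong) (auto simp: algebra_simps)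
      also have "\<dots> = (\<Sum>k\<in>K. c (P k)) * y i j + \<delta> * c (P k0)"
        using fK k0 by (simp add: sum.distrib sum_distrib_right sum.delta sum.delta')
      finally have "0 = (c y + (\<Sum>k\<in>K. c (P k))) * y i j + \<delta> * c (P k0)" by (simp add: algebra_simps)
      then show ?thesis using s0 dn by simp
    qed
    then have "(\<Sum>k\<in>K. c (P k)) = 0" by simp
    then have "c y = 0" using s0 by simp
    then show ?thesis using ck by blast
  qed
  show ?thesis using card fin ai unfolding aff_indep_pts_def by blast
qed

lemma pdim_eqI:
  assumes bnd: "\<And>S. S \<subseteq> P \<Longrightarrow> aff_indep_pts S \<Longrightarrow> card S \<le> m + 1"
    and ex: "S0 \<subseteq> P" "S0 \<noteq> {}" "aff_indep_pts S0" "card S0 = m + 1"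
  shows "pdim P = int m"
proof -
  have P: "P \<noteq> {}" using ex by blast
  define C where "C = {card S | S. S \<subseteq> P \<and> S \<noteq> {} \<and> aff_indep_pts S}"
  have "C \<subseteq> {..m+1}" unfolding C_def using bnd by auto
  then have fC: "finite C" by (rule finite_subset) simp
  have "m + 1 \<in> C" unfolding C_def using ex(1,2,3) ex(4)[symmetric] by blast
  then have "Max C = m + 1" using fC \<open>C \<subseteq> {..m+1}\<close> by (intro Max_eqI) auto
  then show ?thesis unfolding pdim_def C_def using P by simp
qed

lemma card_le_pdim:
  assumes bnd: "\<And>S. S \<subseteq> P \<Longrightarrow> aff_indep_pts S \<Longrightarrow> card S \<le> B"
    and S: "S \<subseteq> P" "S \<noteq> {}" "aff_indep_pts S"
  shows "int (card S) - 1 \<le> pdim P"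
proof -
  have P: "P \<noteq> {}" using S by blast
  define C where "C = {card S | S. S \<subseteq> P \<and> S \<noteq> {} \<and> aff_indep_pts S}"
  have "C \<subseteq> {..B}" unfolding C_def using bnd by auto
  then have fC: "finite C" by (rule finite_subset) simp
  have "card S \<in> C" unfolding C_def using S by blast
  then have "card S \<le> Max C" using fC by simp
  then show ?thesis unfolding pdim_def C_def using P by simp
qed

lemma pdim_attained:
  assumes bnd: "\<And>S. S \<subseteq> P \<Longrightarrow> aff_indep_pts S \<Longrightarrow> card S \<le> B"
    and P: "P \<noteq> {}"
  shows "\<exists>S. S \<subseteq> P \<and> S \<noteq> {} \<and> aff_indep_pts S \<and> pdim P = int (card S) - 1"
proof -
  define C where "C = {card S | S. S \<subseteq> P \<and> S \<noteq> {} \<and> aff_indep_pts S}"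
  have "C \<subseteq> {..B}" unfolding C_def using bnd by auto
  then have fC: "finite C" by (rule finite_subset) simp
  obtain x where "x \<in> P" using P by blast
  then have "card {x} \<in> C" unfolding C_def using aff_indep_singleton by blast
  then have "C \<noteq> {}" by blast
  then have "Max C \<in> C" using fC by simp
  then obtain S where S: "S \<subseteq> P" "S \<noteq> {}" "aff_indep_pts S" "Max C = card S" unfolding C_def by auto
  then show ?thesis unfolding pdim_def C_def using P by auto
qed

lemma aff_indep_insert:
  fixes a :: "nat \<Rightarrow> nat \<Rightarrow> real"
  assumes ai: "aff_indep_pts S" and onS: "\<forall>s\<in>S. (\<Sum>(i, j)\<in>G. a i j * s i j) = b"
    and z: "(\<Sum>(i, j)\<in>G. a i j * z i j) \<noteq> b" and fG: "finite G"
  shows "aff_indep_pts (insert z S) \<and> z \<notin> S"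
proof -
  have fS: "finite S" using ai unfolding aff_indep_pts_def by blast
  have zS: "z \<notin> S" using onS z by blast
  define g where "g = (\<lambda>s :: nat \<Rightarrow> nat \<Rightarrow> real. (\<Sum>p\<in>G. a (fst p) (snd p) * s (fst p) (snd p)))"
  have gdef: "(\<Sum>(i, j)\<in>G. a i j * s i j) = g s" for s unfolding g_def by (simp add: split_def)
  have "\<forall>s\<in>insert z S. c s = 0"
    if c0: "(\<Sum>s\<in>insert z S. c s) = 0" and c1: "\<forall>i j. (\<Sum>s\<in>insert z S. c s * s i j) = 0" for c
  proof -
    have "(\<Sum>s\<in>insert z S. c s * g s) = (\<Sum>p\<in>G. a (fst p) (snd p) * (\<Sum>s\<in>insert z S. c s * s (fst p) (snd p)))"
      unfolding g_def by (simp add: sum_distrib_left sum_distrib_right sum.swap[of _ G] algebra_simps)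
    also have "\<dots> = 0" using c1 by simp
    finally have e1: "(\<Sum>s\<in>insert z S. c s * g s) = 0" .
    have "(\<Sum>s\<in>insert z S. c s * g s) = c z * g z + (\<Sum>s\<in>S. c s * b)"
      using zS fS onS gdef by simp
    also have "\<dots> = c z * g z + (\<Sum>s\<in>S. c s) * b" by (simp add: sum_distrib_right)
    also have "(\<Sum>s\<in>S. c s) = - c z" using c0 zS fS by simp
    finally have e2: "(\<Sum>s\<in>insert z S. c s * g s) = c z * g z + - c z * b" .
    have "c z * (g z - b) = c z * g z + - c z * b" by (simp add: algebra_simps)
    then have "c z * (g z - b) = 0" using e1 e2 by simp
    moreover have "g z \<noteq> b" using z gdef by simp
    ultimately have cz: "c z = 0" by simp
    have "(\<Sum>s\<in>S. c s) = 0" using c0 zS fS cz by simp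
    moreover have "\<forall>i j. (\<Sum>s\<in>S. c s * s i j) = 0" using c1 zS fS cz by simp
    ultimately have "\<forall>s\<in>S. c s = 0" using ai unfolding aff_indep_pts_def by blast
    then show ?thesis using cz by simp
  qed
  then show ?thesis using fS zS unfolding aff_indep_pts_def by simp
qed

lemma pdim_hyperplane_section_less:
  fixes a :: "nat \<Rightarrow> nat \<Rightarrow> real"
  assumes bnd: "\<And>S. S \<subseteq> P \<Longrightarrow> aff_indep_pts S \<Longrightarrow> card S \<le> B" and fI: "finite I"
    and F: "F = {x\<in>P. (\<Sum>(i, j)\<in>I. a i j * x i j) = b}" "F \<noteq> {}" and z: "z \<in> P" "z \<notin> F"
  shows "pdim F < pdim P"
proof -
  have FP: "F \<subseteq> P" using F(1) by blast
  have "\<And>S. S \<subseteq> F \<Longrightarrow> aff_indep_pts S \<Longrightarrow> card S \<le> B" using bnd FP by blast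
  then obtain S where S: "S \<subseteq> F" "S \<noteq> {}" "aff_indep_pts S" "pdim F = int (card S) - 1"
    using pdim_attained[OF _ F(2)] by blast
  have "\<forall>s\<in>S. (\<Sum>(i, j)\<in>I. a i j * s i j) = b" using S(1) F(1) by blast
  moreover have "(\<Sum>(i, j)\<in>I. a i j * z i j) \<noteq> b" using z F(1) by blast
  ultimately have indep: "aff_indep_pts (insert z S)" and "z \<notin> S"
    using aff_indep_insert[OF S(3) _ _ fI] by blast+
  have "int (card (insert z S)) - 1 \<le> pdim P"
    using card_le_pdim[OF bnd _ _ indep] S(1) FP z(1) by blast
  moreover have "finite S" using S(3) unfolding aff_indep_pts_def by blast
  ultimately show ?thesis using S(4) \<open>z \<notin> S\<close> by simp
qed

section \<open>The inequalities of the Gelfand--Tsetlin polytope\<close>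

definition entry :: "(nat \<Rightarrow> nat \<Rightarrow> real) \<Rightarrow> nat \<times> nat \<Rightarrow> real" where
  "entry x p = x (fst p) (snd p)"

text \<open>A pair \<open>(p, q)\<close> stands for the inequality \<open>x\<^sub>q \<le> x\<^sub>p\<close>; these are exactly the edges of \<open>T\<close>,
  oriented downwards.\<close>
definition gt_ineqs :: "nat \<Rightarrow> ((nat \<times> nat) \<times> (nat \<times> nat)) set" where
  "gt_ineqs n = {((i, j), (Suc i, j)) | i j. (Suc i, j) \<in> gt_idx n} \<union>
                {((Suc i, j), (i, Suc j)) | i j. (Suc i, j) \<in> gt_idx n}"

lemma gt_idx_iff: "(i, j) \<in> gt_idx n \<longleftrightarrow> i < n \<and> 1 \<le> j \<and> j \<le> n - i"
  unfolding gt_idx_def by simp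

lemma finite_gt_idx: "finite (gt_idx n)"
proof -
  have "gt_idx n \<subseteq> {..<n} \<times> {..n}" unfolding gt_idx_def by auto
  then show ?thesis by (rule finite_subset) simp
qed

lemma gt_ineqs_cases:
  assumes "e \<in> gt_ineqs n"
  obtains (vert) i j where "e = ((i, j), (Suc i, j))" "(Suc i, j) \<in> gt_idx n"
  | (diag) i j where "e = ((Suc i, j), (i, Suc j))" "(Suc i, j) \<in> gt_idx n"
  using assms unfolding gt_ineqs_def by blast

lemma gt_idx_Suc_bounds:
  assumes "(Suc a, b) \<in> gt_idx n"
  shows "(a, b) \<in> gt_idx n" "(a, Suc b) \<in> gt_idx n" "1 \<le> b" "b < n" "1 \<le> a + b" "a + b < n"
  using assms by (auto simp: gt_idx_iff)

lemma gt_ineqs_idx: "e \<in> gt_ineqs n \<Longrightarrow> fst e \<in> gt_idx n \<and> snd e \<in> gt_idx n \<and> fst e \<noteq> snd e"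
  by (erule gt_ineqs_cases) (auto simp: gt_idx_iff)

lemma gt_ineqs_asym: "(p, q) \<in> gt_ineqs n \<Longrightarrow> (q, p) \<notin> gt_ineqs n"
  by (auto simp: gt_ineqs_def)

lemma finite_gt_ineqs: "finite (gt_ineqs n)"
proof -
  have "gt_ineqs n \<subseteq> gt_idx n \<times> gt_idx n" using gt_ineqs_idx by force
  then show ?thesis using finite_gt_idx by (meson finite_SigmaI finite_subset)
qed

lemma gt_ineqs_upper_neighbours:
  assumes "1 \<le> a" "(a, b) \<in> gt_idx n"
  shows "((a - 1, b), (a, b)) \<in> gt_ineqs n" "((a, b), (a - 1, b + 1)) \<in> gt_ineqs n"
  using assms by (cases a; auto simp: gt_ineqs_def)+

lemma T_edge_iff: "T_edge n p q \<longleftrightarrow> (p, q) \<in> gt_ineqs n \<or> (q, p) \<in> gt_ineqs n"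
proof
  assume "T_edge n p q"
  then show "(p, q) \<in> gt_ineqs n \<or> (q, p) \<in> gt_ineqs n"
    unfolding T_edge_def using gt_ineqs_upper_neighbours[of "fst p" "snd p" n] gt_ineqs_upper_neighbours[of "fst q" "snd q" n]
    by auto
next
  assume "(p, q) \<in> gt_ineqs n \<or> (q, p) \<in> gt_ineqs n"
  then show "T_edge n p q"
    unfolding T_edge_def using gt_ineqs_idx[of "(p, q)" n] gt_ineqs_idx[of "(q, p)" n]
    by (auto simp: gt_ineqs_def)
qed

lemma GT_iff: "x \<in> GT n lam \<longleftrightarrow> x \<in> gt_space n
    \<and> (\<forall>j. 1 \<le> j \<and> j \<le> n \<longrightarrow> x 0 j = real_of_int (lam j))
    \<and> (\<forall>e\<in>gt_ineqs n. entry x (snd e) \<le> entry x (fst e))"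
proof -
  have "(\<forall>e\<in>gt_ineqs n. entry x (snd e) \<le> entry x (fst e)) \<longleftrightarrow>
      (\<forall>i j. i + 2 \<le> n \<and> 1 \<le> j \<and> j \<le> n - i - 1 \<longrightarrow> x i j \<ge> x (i + 1) j \<and> x (i + 1) j \<ge> x i (j + 1))"
    (is "?ineqs \<longleftrightarrow> ?chains")
  proof
    assume ineqs: ?ineqs
    show ?chains
    proof (intro allI impI)
      fix i j assume "i + 2 \<le> n \<and> 1 \<le> j \<and> j \<le> n - i - 1"
      then have "((i, j), (Suc i, j)) \<in> gt_ineqs n" "((Suc i, j), (i, Suc j)) \<in> gt_ineqs n"
        unfolding gt_ineqs_def gt_idx_iff by auto
      then show "x i j \<ge> x (i + 1) j \<and> x (i + 1) j \<ge> x i (j + 1)"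
        using ineqs unfolding entry_def by fastforce
    qed
  next
    assume ?chains
    then show ?ineqs by (fastforce elim: gt_ineqs_cases simp: gt_idx_iff entry_def)
  qed
  then show ?thesis unfolding GT_def by blast
qed

lemma GT_I:
  assumes "x \<in> gt_space n" "\<And>j. 1 \<le> j \<Longrightarrow> j \<le> n \<Longrightarrow> x 0 j = real_of_int (lam j)"
    "\<And>e. e \<in> gt_ineqs n \<Longrightarrow> entry x (snd e) \<le> entry x (fst e)"
  shows "x \<in> GT n lam"
  using assms unfolding GT_iff by blast

lemma GT_ineq: "x \<in> GT n lam \<Longrightarrow> e \<in> gt_ineqs n \<Longrightarrow> entry x (snd e) \<le> entry x (fst e)"
  unfolding GT_iff by blast

lemma GT_top: "x \<in> GT n lam \<Longrightarrow> 1 \<le> j \<Longrightarrow> j \<le> n \<Longrightarrow> x 0 j = real_of_int (lam j)"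
  unfolding GT_iff by blast

lemma GT_zero: "x \<in> GT n lam \<Longrightarrow> (i, j) \<notin> gt_idx n \<Longrightarrow> x i j = 0"
  unfolding GT_def gt_space_def by blast

lemma GT_perturb:
  assumes y: "y \<in> GT n lam" and z: "z \<in> gt_space n" and top: "\<And>j. z 0 j = y 0 j"
    and close: "\<And>p. \<bar>entry z p - entry y p\<bar> \<le> 1/8"
    and slack: "\<And>e. e \<in> gt_ineqs n \<Longrightarrow> entry y (snd e) + 1/4 \<le> entry y (fst e) \<or> entry z (snd e) \<le> entry z (fst e)"
  shows "z \<in> GT n lam"
proof (rule GT_I[OF z])
  show "z 0 j = real_of_int (lam j)" if "1 \<le> j" "j \<le> n" for j
    using GT_top[OF y that] top by simp
  show "entry z (snd e) \<le> entry z (fst e)" if "e \<in> gt_ineqs n" for e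
    using slack[OF that] close[of "fst e"] close[of "snd e"] by linarith
qed

definition top_row :: "nat \<Rightarrow> (nat \<times> nat) set" where
  "top_row n = {p \<in> gt_idx n. fst p = 0}"

definition free_idx :: "nat \<Rightarrow> (nat \<times> nat) set" where
  "free_idx n = gt_idx n - top_row n"

lemma finite_free_idx: "finite (free_idx n)"
  unfolding free_idx_def using finite_gt_idx by simp

lemma GT_entry_not_free:
  assumes "x \<in> GT n lam" "(i, j) \<notin> free_idx n"
  shows "x i j = (if (i, j) \<in> gt_idx n then real_of_int (lam j) else 0)"
proof (cases "(i, j) \<in> gt_idx n")
  case True
  then have "i = 0" "1 \<le> j" "j \<le> n" using assms(2) by (auto simp: free_idx_def top_row_def gt_idx_iff)
  then show ?thesis using GT_top[OF assms(1)] True by simp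
qed (simp add: GT_zero[OF assms(1)])

lemma aff_indep_GT_card_le:
  assumes "S \<subseteq> GT n lam" "aff_indep_pts S"
  shows "card S \<le> card (free_idx n) + 1"
proof (rule aff_indep_card_le[OF assms(2) finite_free_idx])
  fix i j
  show "(\<exists>a. \<forall>s\<in>S. s i j = a) \<or> (\<exists>k\<in>free_idx n. \<forall>s\<in>S. s i j = s (fst k) (snd k))"
  proof (cases "(i, j) \<in> free_idx n")
    case False
    then show ?thesis using GT_entry_not_free[OF _ False] assms(1) by blast
  qed (auto intro: bexI[of _ "(i, j)"])
qed

definition lower_node :: "(nat \<times> nat) \<times> (nat \<times> nat) \<Rightarrow> nat \<times> nat" where
  "lower_node e = (if fst (fst e) < fst (snd e) then snd e else fst e)"

definition upper_node :: "(nat \<times> nat) \<times> (nat \<times> nat) \<Rightarrow> nat \<times> nat" where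
  "upper_node e = (if fst (fst e) < fst (snd e) then fst e else snd e)"

lemma lower_upper_node:
  assumes "e \<in> gt_ineqs n"
  shows "lower_node e \<in> free_idx n" "upper_node e \<noteq> lower_node e"
    "{lower_node e, upper_node e} = {fst e, snd e}"
  using assms
  by (cases rule: gt_ineqs_cases; auto simp: lower_node_def upper_node_def free_idx_def top_row_def gt_idx_iff)+

definition unit_pt :: "nat \<times> nat \<Rightarrow> nat \<Rightarrow> nat \<Rightarrow> real" where
  "unit_pt k = (\<lambda>i j. if (i, j) = k then 1 else 0)"

text \<open>Moving the upper node of \<open>e\<close> drags the lower node along, which keeps \<open>e\<close> tight.\<close>
definition face_dir :: "(nat \<times> nat) \<times> (nat \<times> nat) \<Rightarrow> nat \<times> nat \<Rightarrow> nat \<Rightarrow> nat \<Rightarrow> real" where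
  "face_dir e k = (\<lambda>i j. unit_pt k i j + (if k = upper_node e then unit_pt (lower_node e) i j else 0))"

definition ineq_face :: "nat \<Rightarrow> (nat \<Rightarrow> int) \<Rightarrow> (nat \<times> nat) \<times> (nat \<times> nat) \<Rightarrow> (nat \<Rightarrow> nat \<Rightarrow> real) set" where
  "ineq_face n lam e = {x \<in> GT n lam. entry x (fst e) = entry x (snd e)}"

lemma ineq_face_lower_upper:
  "e \<in> gt_ineqs n \<Longrightarrow> x \<in> ineq_face n lam e \<Longrightarrow> entry x (lower_node e) = entry x (upper_node e)"
  using lower_upper_node(2,3)[of e n] unfolding ineq_face_def by (auto simp: doubleton_eq_iff)

lemma aff_indep_ineq_face_card_le:
  assumes e: "e \<in> gt_ineqs n" and S: "S \<subseteq> ineq_face n lam e" "aff_indep_pts S"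
  shows "card S \<le> card (free_idx n - {lower_node e}) + 1"
proof (rule aff_indep_card_le[OF S(2)])
  show "finite (free_idx n - {lower_node e})" using finite_free_idx by simp
  have SG: "S \<subseteq> GT n lam" using S(1) unfolding ineq_face_def by blast
  have coord: "(\<exists>a. \<forall>s\<in>S. entry s p = a) \<or> (\<exists>k\<in>free_idx n - {lower_node e}. \<forall>s\<in>S. entry s p = entry s k)"
    if "p \<noteq> lower_node e" for p
  proof (cases "p \<in> free_idx n")
    case True
    then have "p \<in> free_idx n - {lower_node e}" using that by blast
    then show ?thesis by blast
  next
    case False
    have "entry s p = (if p \<in> gt_idx n then real_of_int (lam (snd p)) else 0)" if "s \<in> S" for s
      using GT_entry_not_free[of s n lam "fst p" "snd p"] SG that False by (simp add: entry_def subsetD)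
    then show ?thesis by blast
  qed
  fix i j
  have "(\<exists>a. \<forall>s\<in>S. entry s (i, j) = a) \<or> (\<exists>k\<in>free_idx n - {lower_node e}. \<forall>s\<in>S. entry s (i, j) = entry s k)"
  proof (cases "(i, j) = lower_node e")
    case True
    have eq: "\<forall>s\<in>S. entry s (i, j) = entry s (upper_node e)"
      using ineq_face_lower_upper[OF e subsetD[OF S(1)]] True by simp
    from coord[OF lower_upper_node(2)[OF e]] show ?thesis
    proof
      assume "\<exists>a. \<forall>s\<in>S. entry s (upper_node e) = a"
      then obtain a where "\<forall>s\<in>S. entry s (upper_node e) = a" by blast
      then have "\<forall>s\<in>S. entry s (i, j) = a" using eq by simp
      then show ?thesis by blast
    next
      assume "\<exists>k\<in>free_idx n - {lower_node e}. \<forall>s\<in>S. entry s (upper_node e) = entry s k"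
      then obtain k where "k \<in> free_idx n - {lower_node e}" "\<forall>s\<in>S. entry s (upper_node e) = entry s k"
        by blast
      then have "k \<in> free_idx n - {lower_node e}" "\<forall>s\<in>S. entry s (i, j) = entry s k" using eq by simp_all
      then show ?thesis by blast
    qed
  qed (rule coord)
  then show "(\<exists>a. \<forall>s\<in>S. s i j = a) \<or> (\<exists>k\<in>free_idx n - {lower_node e}. \<forall>s\<in>S. s i j = s (fst k) (snd k))"
    by (simp add: entry_def)
qed

section \<open>Supporting hyperplanes\<close>

definition lin :: "nat \<Rightarrow> (nat \<Rightarrow> nat \<Rightarrow> real) \<Rightarrow> (nat \<Rightarrow> nat \<Rightarrow> real) \<Rightarrow> real" where
  "lin n a x = (\<Sum>(i, j)\<in>gt_idx n. a i j * x i j)"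

lemma lin_comb: "lin n a (\<lambda>i j. \<alpha> * u i j + \<beta> * w i j) = \<alpha> * lin n a u + \<beta> * lin n a w"
  unfolding lin_def by (simp add: split_def sum.distrib sum_distrib_left algebra_simps)

lemma lin_avg:
  "lin n a (\<lambda>i j. (u i j + (\<Sum>e\<in>I. w e i j)) / c) = (lin n a u + (\<Sum>e\<in>I. lin n a (w e))) / c"
proof -
  have "lin n a (\<lambda>i j. (u i j + (\<Sum>e\<in>I. w e i j)) / c)
     = (\<Sum>p\<in>gt_idx n. a (fst p) (snd p) * u (fst p) (snd p) + (\<Sum>e\<in>I. a (fst p) (snd p) * w e (fst p) (snd p))) / c"
    unfolding lin_def by (simp add: split_def sum_divide_distrib sum_distrib_left algebra_simps)
  also have "\<dots> = ((\<Sum>p\<in>gt_idx n. a (fst p) (snd p) * u (fst p) (snd p))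
      + (\<Sum>e\<in>I. \<Sum>p\<in>gt_idx n. a (fst p) (snd p) * w e (fst p) (snd p))) / c"
    by (simp add: sum.distrib sum.swap[of _ "gt_idx n"])
  finally show ?thesis unfolding lin_def by (simp add: split_def)
qed

lemma lin_entry_diff:
  assumes "p \<in> gt_idx n" "q \<in> gt_idx n" "p \<noteq> q"
  shows "lin n (\<lambda>i j. (if (i, j) = p then 1 else 0) - (if (i, j) = q then 1 else 0)) x = entry x p - entry x q"
proof -
  have "lin n (\<lambda>i j. (if (i, j) = p then 1 else 0) - (if (i, j) = q then 1 else 0)) x
     = (\<Sum>r\<in>gt_idx n. (if r = p then entry x r else 0) - (if r = q then entry x r else 0))"
    unfolding lin_def entry_def by (intro sum.cong) (auto simp: split_def)
  also have "\<dots> = entry x p - entry x q" using assms finite_gt_idx by (simp add: sum_subtractf)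
  finally show ?thesis .
qed

lemma ineq_face_face: "e \<in> gt_ineqs n \<Longrightarrow> face_gt n (GT n lam) (ineq_face n lam e)"
  using GT_ineq[of _ n lam e] lin_entry_diff[of "snd e" n "fst e"] gt_ineqs_idx[of e n]
  unfolding face_gt_def ineq_face_def lin_def[symmetric]
  by (intro exI[of _ "\<lambda>i j. (if (i, j) = snd e then 1 else 0) - (if (i, j) = fst e then 1 else 0)"] exI[of _ 0])
     force

lemma GT_average:
  assumes I: "finite I" and v: "v \<in> GT n lam" and x: "\<And>e. e \<in> I \<Longrightarrow> x e \<in> GT n lam"
  shows "(\<lambda>i j. (v i j + (\<Sum>e\<in>I. x e i j)) / (real (card I) + 1)) \<in> GT n lam" (is "?y \<in> _")
proof (rule GT_I)
  show "?y \<in> gt_space n" unfolding gt_space_def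
  proof (intro CollectI allI impI)
    fix i j assume ij: "(i, j) \<notin> gt_idx n"
    have "x e i j = 0" if "e \<in> I" for e using GT_zero[OF x[OF that] ij] .
    then show "?y i j = 0" using GT_zero[OF v ij] by simp
  qed
  show "?y 0 j = real_of_int (lam j)" if "1 \<le> j" "j \<le> n" for j
  proof -
    have "x e 0 j = real_of_int (lam j)" if "e \<in> I" for e using GT_top[OF x[OF that]] \<open>1 \<le> j\<close> \<open>j \<le> n\<close> .
    then show ?thesis using GT_top[OF v that] by (simp add: field_simps)
  qed
  show "entry ?y (snd e) \<le> entry ?y (fst e)" if "e \<in> gt_ineqs n" for e
  proof -
    have "(\<Sum>e'\<in>I. entry (x e') (snd e)) \<le> (\<Sum>e'\<in>I. entry (x e') (fst e))"
      using GT_ineq[OF x that] by (intro sum_mono)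
    then show ?thesis using GT_ineq[OF v that] unfolding entry_def by (simp add: divide_right_mono)
  qed
qed

text \<open>Averaging witnesses of the individual strict inequalities stays on the hyperplane.\<close>
lemma ex_hyperplane_point_strict:
  assumes v: "v \<in> GT n lam" "lin n a v = b"
    and witness: "\<And>e. e \<in> gt_ineqs n \<Longrightarrow> \<exists>x\<in>GT n lam. lin n a x = b \<and> entry x (snd e) < entry x (fst e)"
  shows "\<exists>y\<in>GT n lam. lin n a y = b \<and> (\<forall>e\<in>gt_ineqs n. entry y (snd e) < entry y (fst e))"
proof -
  obtain x where x: "\<And>e. e \<in> gt_ineqs n \<Longrightarrow> x e \<in> GT n lam \<and> lin n a (x e) = b \<and> entry (x e) (snd e) < entry (x e) (fst e)"
    using witness by metis
  define N where "N = card (gt_ineqs n)"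
  define y where "y = (\<lambda>i j. (v i j + (\<Sum>e\<in>gt_ineqs n. x e i j)) / (real N + 1))"
  have "y \<in> GT n lam" unfolding y_def N_def using GT_average[OF finite_gt_ineqs v(1)] x by blast
  moreover have "lin n a y = b"
  proof -
    have "lin n a y = (lin n a v + (\<Sum>e\<in>gt_ineqs n. lin n a (x e))) / (real N + 1)"
      unfolding y_def by (rule lin_avg)
    also have "\<dots> = (b + real N * b) / (real N + 1)" using x v(2) unfolding N_def by simp
    also have "\<dots> = b" by (simp add: field_simps)
    finally show ?thesis .
  qed
  moreover have "entry y (snd e) < entry y (fst e)" if e: "e \<in> gt_ineqs n" for e
  proof -
    have "(\<Sum>e'\<in>gt_ineqs n. entry (x e') (snd e)) < (\<Sum>e'\<in>gt_ineqs n. entry (x e') (fst e))"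
      using GT_ineq[OF _ e] x e finite_gt_ineqs by (intro sum_strict_mono_ex1) blast+
    then show ?thesis using GT_ineq[OF v(1) e] unfolding y_def entry_def by (simp add: divide_strict_right_mono)
  qed
  ultimately show ?thesis by blast
qed

text \<open>One can step from \<open>y\<close> slightly beyond \<open>y\<close>, away from \<open>x\<close>, without leaving \<open>GT\<close>; the
  supporting inequality at that point forces \<open>lin n a x = b\<close>.\<close>
lemma supporting_hyperplane_through_strict_point:
  assumes valid: "\<forall>x\<in>GT n lam. lin n a x \<le> b" and y: "y \<in> GT n lam" "lin n a y = b"
    and strict: "\<forall>e\<in>gt_ineqs n. entry y (snd e) < entry y (fst e)"
    and x: "x \<in> GT n lam"
  shows "lin n a x = b"
proof -
  define sy where "sy = (\<lambda>e. entry y (fst e) - entry y (snd e))"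
  define sx where "sx = (\<lambda>e. entry x (fst e) - entry x (snd e))"
  define t where "t = Min (insert 1 ((\<lambda>e. sy e / (1 + \<bar>sx e\<bar>)) ` gt_ineqs n))"
  have sy_pos: "e \<in> gt_ineqs n \<Longrightarrow> 0 < sy e" for e using strict unfolding sy_def by simp
  have t_pos: "0 < t" unfolding t_def using finite_gt_ineqs sy_pos
    by (subst Min_gr_iff) (auto intro!: divide_pos_pos)
  have t_le: "t * (1 + \<bar>sx e\<bar>) \<le> sy e" if "e \<in> gt_ineqs n" for e
  proof -
    have "t \<le> sy e / (1 + \<bar>sx e\<bar>)" unfolding t_def using finite_gt_ineqs that by (intro Min_le) auto
    then show ?thesis by (simp add: pos_le_divide_eq)
  qed
  define w where "w = (\<lambda>i j. (1 + t) * y i j + (- t) * x i j)"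
  have "w \<in> GT n lam"
  proof (rule GT_I)
    show "w \<in> gt_space n" unfolding gt_space_def w_def using GT_zero[OF y(1)] GT_zero[OF x] by simp
    show "w 0 j = real_of_int (lam j)" if "1 \<le> j" "j \<le> n" for j
      unfolding w_def using GT_top[OF y(1) that] GT_top[OF x that] by (simp add: algebra_simps)
    show "entry w (snd e) \<le> entry w (fst e)" if e: "e \<in> gt_ineqs n" for e
    proof -
      have "entry w (fst e) - entry w (snd e) = sy e + t * sy e - t * sx e"
        unfolding w_def entry_def sy_def sx_def by (simp add: algebra_simps)
      moreover have "t * sx e \<le> t * \<bar>sx e\<bar>" using t_pos by (intro mult_left_mono) auto
      moreover have "0 \<le> t * sy e" using t_pos sy_pos[OF e] by simp
      moreover have "t + t * \<bar>sx e\<bar> \<le> sy e" using t_le[OF e] by (simp add: algebra_simps)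
      ultimately show ?thesis using t_pos by linarith
    qed
  qed
  then have "lin n a w \<le> b" using valid by blast
  then have "(1 + t) * b + (- t) * lin n a x \<le> b" unfolding w_def lin_comb y(2) .
  then have "b \<le> lin n a x" using t_pos by (simp add: algebra_simps)
  then show ?thesis using valid x by (simp add: order_antisym)
qed

section \<open>Facets for a regular weight\<close>

locale regular_weight =
  fixes n :: nat and lam :: "nat \<Rightarrow> int"
  assumes regular: "\<forall>j. 1 \<le> j \<and> j < n \<longrightarrow> lam j > lam (j + 1)"
begin

lemma lam_step: "1 \<le> j \<Longrightarrow> j < n \<Longrightarrow> real_of_int (lam (Suc j)) + 1 \<le> real_of_int (lam j)"
  using regular by (simp add: int_less_real_le[symmetric])

lemma lam_strict_antimono: "1 \<le> j \<Longrightarrow> j < j' \<Longrightarrow> j' \<le> n \<Longrightarrow> lam j' < lam j"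
proof (induction j' rule: less_induct)
  case (less j')
  show ?case
  proof (cases "j' = Suc j")
    case False
    then obtain k where k: "j' = Suc k" "j < k" using less.prems(2) by (cases j') auto
    then have "lam k < lam j" using less by simp
    moreover have "lam (k + 1) < lam k" using regular k less.prems by simp
    ultimately show ?thesis using k by simp
  qed (use regular less.prems in simp)
qed

text \<open>Two points with every inequality slack by at least \<open>1/4\<close>: \<open>col_pt\<close> is almost constant on the
  columns \<open>j\<close> and \<open>diag_pt\<close> on the diagonals \<open>i + j\<close>; regularity supplies the slack across
  columns resp. diagonals. Moving the lower endpoint of an inequality \<open>e\<close> onto its upper endpoint
  in the point that is constant along \<open>e\<close> yields \<open>tight_pt e\<close>, at which \<open>e\<close> is the only tight
  inequality.\<close>

definition col_pt :: "nat \<Rightarrow> nat \<Rightarrow> real" where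
  "col_pt = (\<lambda>i j. if (i, j) \<in> gt_idx n then real_of_int (lam j) - real i / 4 else 0)"

definition diag_pt :: "nat \<Rightarrow> nat \<Rightarrow> real" where
  "diag_pt = (\<lambda>i j. if (i, j) \<in> gt_idx n then real_of_int (lam (i + j)) + real i / 4 else 0)"

definition tight_pt :: "(nat \<times> nat) \<times> (nat \<times> nat) \<Rightarrow> nat \<Rightarrow> nat \<Rightarrow> real" where
  "tight_pt e = (if fst (fst e) < fst (snd e)
     then (\<lambda>a b. if (a, b) = snd e then entry col_pt (fst e) else col_pt a b)
     else (\<lambda>a b. if (a, b) = fst e then entry diag_pt (snd e) else diag_pt a b))"

lemma col_pt_slack: "e \<in> gt_ineqs n \<Longrightarrow> entry col_pt (snd e) + 1/4 \<le> entry col_pt (fst e)"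
proof (erule gt_ineqs_cases)
  fix a b assume e: "e = ((a, b), (Suc a, b))" and m: "(Suc a, b) \<in> gt_idx n"
  show ?thesis unfolding e entry_def col_pt_def using m gt_idx_Suc_bounds[OF m] by (simp add: field_simps)
next
  fix a b assume e: "e = ((Suc a, b), (a, Suc b))" and m: "(Suc a, b) \<in> gt_idx n"
  have "real_of_int (lam (Suc b)) + 1 \<le> real_of_int (lam b)" using lam_step gt_idx_Suc_bounds[OF m] by blast
  then show ?thesis unfolding e entry_def col_pt_def using m gt_idx_Suc_bounds[OF m] by (simp add: field_simps)
qed

lemma tight_pt_slack:
  assumes e: "e \<in> gt_ineqs n" and e': "e' \<in> gt_ineqs n" "e' \<noteq> e"
  shows "entry (tight_pt e) (snd e') + 1/4 \<le> entry (tight_pt e) (fst e')"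
  using e'(1)
proof (cases rule: gt_ineqs_cases)
  case (vert a b)
  note f = gt_idx_Suc_bounds[OF vert(2)]
  have l: "real_of_int (lam (Suc (a + b))) + 1 \<le> real_of_int (lam (a + b))" using lam_step f by blast
  from e show ?thesis
  proof (cases rule: gt_ineqs_cases)
    case (vert i j)
    show ?thesis using \<open>e' = _\<close> vert e'(2) f gt_idx_Suc_bounds[OF vert(2)] \<open>(Suc a, b) \<in> gt_idx n\<close>
      unfolding tight_pt_def entry_def col_pt_def by (auto simp: field_simps)
  next
    case (diag i j)
    show ?thesis using \<open>e' = _\<close> diag e'(2) f gt_idx_Suc_bounds[OF diag(2)] l \<open>(Suc a, b) \<in> gt_idx n\<close>
      unfolding tight_pt_def entry_def diag_pt_def by (auto simp: field_simps)
  qed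
next
  case (diag a b)
  note f = gt_idx_Suc_bounds[OF diag(2)]
  have l: "real_of_int (lam (Suc b)) + 1 \<le> real_of_int (lam b)" using lam_step f by blast
  from e show ?thesis
  proof (cases rule: gt_ineqs_cases)
    case (vert i j)
    show ?thesis using \<open>e' = _\<close> vert e'(2) f gt_idx_Suc_bounds[OF vert(2)] l \<open>(Suc a, b) \<in> gt_idx n\<close>
      unfolding tight_pt_def entry_def col_pt_def by (auto simp: field_simps)
  next
    case (diag i j)
    show ?thesis using \<open>e' = _\<close> diag e'(2) f gt_idx_Suc_bounds[OF diag(2)] \<open>(Suc a, b) \<in> gt_idx n\<close>
      unfolding tight_pt_def entry_def diag_pt_def by (auto simp: field_simps)
  qed
qed

lemma col_pt_GT: "col_pt \<in> GT n lam"
proof (rule GT_I)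
  show "col_pt \<in> gt_space n" unfolding col_pt_def gt_space_def by auto
  show "col_pt 0 j = real_of_int (lam j)" if "1 \<le> j" "j \<le> n" for j
    using that unfolding col_pt_def by (simp add: gt_idx_iff)
  show "entry col_pt (snd e) \<le> entry col_pt (fst e)" if "e \<in> gt_ineqs n" for e
    using col_pt_slack[OF that] by linarith
qed

lemma tight_pt_tight: "e \<in> gt_ineqs n \<Longrightarrow> entry (tight_pt e) (fst e) = entry (tight_pt e) (snd e)"
  by (erule gt_ineqs_cases) (auto simp: tight_pt_def entry_def)

lemma tight_pt_GT: assumes e: "e \<in> gt_ineqs n" shows "tight_pt e \<in> GT n lam"
proof (rule GT_I)
  have lower: "lower_node e \<in> gt_idx n - top_row n"
    using lower_upper_node(1)[OF e] by (simp add: free_idx_def)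
  show "tight_pt e \<in> gt_space n" using e lower
    by (cases rule: gt_ineqs_cases) (auto simp: tight_pt_def col_pt_def diag_pt_def gt_space_def lower_node_def)
  show "tight_pt e 0 j = real_of_int (lam j)" if "1 \<le> j" "j \<le> n" for j using e lower that
    by (cases rule: gt_ineqs_cases) (auto simp: tight_pt_def col_pt_def diag_pt_def top_row_def gt_idx_iff lower_node_def)
  show "entry (tight_pt e) (snd e') \<le> entry (tight_pt e) (fst e')" if e': "e' \<in> gt_ineqs n" for e'
    using tight_pt_tight[OF e] tight_pt_slack[OF e e'] by (cases "e' = e") auto
qed

lemma pdim_GT: "pdim (GT n lam) = int (card (free_idx n))"
proof -
  define P where "P = (\<lambda>k i j. col_pt i j + 1/8 * unit_pt k i j)"
  have "aff_indep_pts (insert col_pt (P ` free_idx n)) \<and> card (insert col_pt (P ` free_idx n)) = card (free_idx n) + 1"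
    by (rule aff_indep_perturbation[OF finite_free_idx _ _ P_def]) (auto simp: unit_pt_def)
  then have indep: "aff_indep_pts (insert col_pt (P ` free_idx n))"
    and card: "card (insert col_pt (P ` free_idx n)) = card (free_idx n) + 1" by blast+
  have "P k \<in> GT n lam" if k: "k \<in> free_idx n" for k
  proof (rule GT_perturb[OF col_pt_GT])
    have kk: "k \<in> gt_idx n" "fst k \<noteq> 0" using k by (auto simp: free_idx_def top_row_def)
    show "P k \<in> gt_space n" using GT_zero[OF col_pt_GT] kk unfolding P_def unit_pt_def gt_space_def by auto
    show "P k 0 j = col_pt 0 j" for j using kk unfolding P_def unit_pt_def by auto
    show "\<bar>entry (P k) p - entry col_pt p\<bar> \<le> 1/8" for p
      by (simp add: P_def unit_pt_def entry_def)
    show "entry col_pt (snd e) + 1/4 \<le> entry col_pt (fst e) \<or> entry (P k) (snd e) \<le> entry (P k) (fst e)"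
      if "e \<in> gt_ineqs n" for e
      using col_pt_slack[OF that] by simp
  qed
  then have "insert col_pt (P ` free_idx n) \<subseteq> GT n lam" using col_pt_GT by blast
  from pdim_eqI[OF aff_indep_GT_card_le this insert_not_empty indep card] show ?thesis .
qed

lemma face_perturbation_in_ineq_face:
  assumes e: "e \<in> gt_ineqs n" and k: "k \<in> free_idx n - {lower_node e}"
  shows "(\<lambda>i j. tight_pt e i j + 1/8 * face_dir e k i j) \<in> ineq_face n lam e" (is "?x \<in> _")
proof -
  have nodes: "lower_node e \<in> free_idx n" "upper_node e \<noteq> lower_node e"
    "{lower_node e, upper_node e} = {fst e, snd e}"
    using lower_upper_node[OF e] by auto
  have kk: "k \<in> gt_idx n" "fst k \<noteq> 0" "k \<noteq> lower_node e"
    using k unfolding free_idx_def top_row_def by auto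
  have ends: "face_dir e k (fst q) (snd q) = (if k = upper_node e then 1 else 0)" if "q \<in> {fst e, snd e}" for q
  proof -
    have "q = lower_node e \<or> q = upper_node e" using that nodes(3) by blast
    then show ?thesis using kk(3) nodes(2) unfolding face_dir_def unit_pt_def by auto
  qed
  have tight: "entry ?x (fst e) = entry ?x (snd e)"
    using tight_pt_tight[OF e] ends[of "fst e"] ends[of "snd e"] unfolding entry_def by simp
  have "?x \<in> GT n lam"
  proof (rule GT_perturb[OF tight_pt_GT[OF e]])
    show "?x \<in> gt_space n" using GT_zero[OF tight_pt_GT[OF e]] kk nodes(1)
      unfolding face_dir_def unit_pt_def gt_space_def free_idx_def by auto
    show "?x 0 j = tight_pt e 0 j" for j
    proof -
      have "fst (lower_node e) \<noteq> 0" using nodes(1) by (simp add: free_idx_def top_row_def)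
      then have "(0, j) \<noteq> lower_node e" "(0, j) \<noteq> k" using kk(2) by (metis fst_conv)+
      then show ?thesis unfolding face_dir_def unit_pt_def by simp
    qed
    show "\<bar>entry ?x p - entry (tight_pt e) p\<bar> \<le> 1/8" for p
      using kk unfolding face_dir_def unit_pt_def entry_def by auto
    show "entry (tight_pt e) (snd e') + 1/4 \<le> entry (tight_pt e) (fst e') \<or> entry ?x (snd e') \<le> entry ?x (fst e')"
      if "e' \<in> gt_ineqs n" for e'
      using tight tight_pt_slack[OF e that] by (cases "e' = e") auto
  qed
  then show ?thesis using tight unfolding ineq_face_def by simp
qed

lemma pdim_ineq_face:
  assumes e: "e \<in> gt_ineqs n"
  shows "pdim (ineq_face n lam e) = int (card (free_idx n)) - 1"
proof -
  define K where "K = free_idx n - {lower_node e}"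
  define P where "P = (\<lambda>k i j. tight_pt e i j + 1/8 * face_dir e k i j)"
  have lower: "lower_node e \<in> free_idx n" "upper_node e \<noteq> lower_node e" using lower_upper_node[OF e] by auto
  have "aff_indep_pts (insert (tight_pt e) (P ` K)) \<and> card (insert (tight_pt e) (P ` K)) = card K + 1"
    by (rule aff_indep_perturbation[OF _ _ _ P_def])
      (use lower in \<open>auto simp: face_dir_def unit_pt_def K_def finite_free_idx\<close>)
  then have indep: "aff_indep_pts (insert (tight_pt e) (P ` K))"
    and card: "card (insert (tight_pt e) (P ` K)) = card K + 1" by blast+
  have "tight_pt e \<in> ineq_face n lam e"
    using tight_pt_GT[OF e] tight_pt_tight[OF e] unfolding ineq_face_def by simp
  then have sub: "insert (tight_pt e) (P ` K) \<subseteq> ineq_face n lam e"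
    using face_perturbation_in_ineq_face[OF e] unfolding P_def K_def by blast
  have bnd: "\<And>S. S \<subseteq> ineq_face n lam e \<Longrightarrow> aff_indep_pts S \<Longrightarrow> card S \<le> card K + 1"
    unfolding K_def by (rule aff_indep_ineq_face_card_le[OF e])
  have "pdim (ineq_face n lam e) = int (card K)"
    using pdim_eqI[OF bnd sub insert_not_empty indep card] .
  moreover have "card K = card (free_idx n) - 1" "0 < card (free_idx n)"
    unfolding K_def using lower(1) finite_free_idx card_gt_0_iff by (auto simp: card_Diff_singleton)
  ultimately show ?thesis by simp
qed

lemma ineq_face_facet: "e \<in> gt_ineqs n \<Longrightarrow> facet_gt n (GT n lam) (ineq_face n lam e)"
  unfolding facet_gt_def using ineq_face_face pdim_ineq_face pdim_GT by simp

lemma facet_eq_ineq_face: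
  assumes F: "facet_gt n (GT n lam) F" and v: "v \<in> F"
  shows "\<exists>e\<in>gt_ineqs n. F = ineq_face n lam e"
proof -
  obtain a b where valid: "\<forall>x\<in>GT n lam. lin n a x \<le> b" and F_eq: "F = {x\<in>GT n lam. lin n a x = b}"
    using F unfolding facet_gt_def face_gt_def lin_def by blast
  have pdim_F: "pdim F = pdim (GT n lam) - 1" using F unfolding facet_gt_def by simp
  have "\<exists>e\<in>gt_ineqs n. F \<subseteq> ineq_face n lam e"
  proof (rule ccontr)
    assume none: "\<not> ?thesis"
    have witness: "\<exists>x\<in>GT n lam. lin n a x = b \<and> entry x (snd e) < entry x (fst e)"
      if e: "e \<in> gt_ineqs n" for e
    proof -
      obtain x where "x \<in> F" "x \<notin> ineq_face n lam e" using none e by blast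
      then have x: "x \<in> GT n lam" "lin n a x = b" "entry x (fst e) \<noteq> entry x (snd e)"
        using F_eq unfolding ineq_face_def by auto
      then have "entry x (snd e) < entry x (fst e)" using GT_ineq[OF x(1) e] by simp
      then show ?thesis using x by blast
    qed
    have "v \<in> GT n lam" "lin n a v = b" using v F_eq by auto
    then obtain y where "y \<in> GT n lam" "lin n a y = b" "\<forall>e\<in>gt_ineqs n. entry y (snd e) < entry y (fst e)"
      using ex_hyperplane_point_strict[OF _ _ witness] by blast
    then have "\<forall>x\<in>GT n lam. lin n a x = b"
      using supporting_hyperplane_through_strict_point[OF valid] by blast
    then have "F = GT n lam" unfolding F_eq by blast
    then show False using pdim_F by simp
  qed
  then obtain e where e: "e \<in> gt_ineqs n" "F \<subseteq> ineq_face n lam e" by blast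
  have "F = ineq_face n lam e"
  proof (rule ccontr)
    assume "F \<noteq> ineq_face n lam e"
    then obtain z where "z \<in> ineq_face n lam e" "z \<notin> F" using e(2) by blast
    moreover have "F = {x\<in>ineq_face n lam e. (\<Sum>(i, j)\<in>gt_idx n. a i j * x i j) = b}"
      using F_eq e(2) unfolding ineq_face_def lin_def by blast
    moreover have "F \<noteq> {}" using v by blast
    ultimately have "pdim F < pdim (ineq_face n lam e)"
      by (intro pdim_hyperplane_section_less[OF aff_indep_ineq_face_card_le[OF e(1)] finite_gt_idx])
    then show False using pdim_F pdim_GT pdim_ineq_face[OF e(1)] by simp
  qed
  then show ?thesis using e(1) by blast
qed

lemma inj_on_ineq_face: "inj_on (ineq_face n lam) (gt_ineqs n)"
proof (rule inj_onI)
  fix e e' assume e: "e \<in> gt_ineqs n" and e': "e' \<in> gt_ineqs n" and eq: "ineq_face n lam e = ineq_face n lam e'"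
  have "tight_pt e \<in> ineq_face n lam e'"
    using tight_pt_GT[OF e] tight_pt_tight[OF e] eq unfolding ineq_face_def by blast
  then show "e = e'" using tight_pt_slack[OF e e'] unfolding ineq_face_def by force
qed

lemma facets_through_eq:
  assumes "v \<in> GT n lam"
  shows "{F. facet_gt n (GT n lam) F \<and> v \<in> F} = ineq_face n lam ` {e \<in> gt_ineqs n. entry v (fst e) = entry v (snd e)}"
  using facet_eq_ineq_face ineq_face_facet assms unfolding ineq_face_def by fastforce

lemma card_facets_through:
  assumes "v \<in> GT n lam"
  shows "card {F. facet_gt n (GT n lam) F \<and> v \<in> F} = card {e \<in> gt_ineqs n. entry v (fst e) = entry v (snd e)}"
  unfolding facets_through_eq[OF assms] by (rule card_image) (rule inj_on_subset[OF inj_on_ineq_face], blast)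

end

section \<open>The graph of a vertex\<close>

lemma Gamma_edge_iff:
  "Gamma_edge n v p q \<longleftrightarrow> ((p, q) \<in> gt_ineqs n \<or> (q, p) \<in> gt_ineqs n) \<and> entry v p = entry v q"
  unfolding Gamma_edge_def T_edge_iff entry_def by simp

lemma Gamma_edge_sym: "Gamma_edge n v p q \<Longrightarrow> Gamma_edge n v q p"
  unfolding Gamma_edge_iff by auto

lemma Gamma_edge_idx: "Gamma_edge n v p q \<Longrightarrow> p \<in> gt_idx n \<and> q \<in> gt_idx n"
  unfolding Gamma_edge_def T_edge_def by blast

lemma Gamma_edge_irrefl: "\<not> Gamma_edge n v p p"
  unfolding Gamma_edge_iff using gt_ineqs_idx by fastforce

lemma rtranclp_Gamma_edge_entry: "(Gamma_edge n v)\<^sup>*\<^sup>* p q \<Longrightarrow> entry v p = entry v q"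
  by (induction rule: rtranclp_induct) (auto simp: Gamma_edge_iff)

lemma card_Gamma_edges:
  "card {{p, q} | p q. Gamma_edge n v p q} = card {e \<in> gt_ineqs n. entry v (fst e) = entry v (snd e)}"
proof -
  have "{{p, q} | p q. Gamma_edge n v p q} = (\<lambda>e. {fst e, snd e}) ` {e \<in> gt_ineqs n. entry v (fst e) = entry v (snd e)}"
  proof (intro equalityI subsetI)
    fix s assume "s \<in> {{p, q} | p q. Gamma_edge n v p q}"
    then obtain p q where s: "s = {p, q}" "entry v p = entry v q"
      and "(p, q) \<in> gt_ineqs n \<or> (q, p) \<in> gt_ineqs n" unfolding Gamma_edge_iff by blast
    then consider "(p, q) \<in> gt_ineqs n" | "(q, p) \<in> gt_ineqs n" by blast
    then show "s \<in> (\<lambda>e. {fst e, snd e}) ` {e \<in> gt_ineqs n. entry v (fst e) = entry v (snd e)}"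
    proof cases
      case 1 then show ?thesis using s by (intro image_eqI[of _ _ "(p, q)"]) auto
    next
      case 2 then show ?thesis using s by (intro image_eqI[of _ _ "(q, p)"]) auto
    qed
  next
    fix s assume "s \<in> (\<lambda>e. {fst e, snd e}) ` {e \<in> gt_ineqs n. entry v (fst e) = entry v (snd e)}"
    then obtain p q where "(p, q) \<in> gt_ineqs n" "entry v p = entry v q" "s = {p, q}" by auto
    then show "s \<in> {{p, q} | p q. Gamma_edge n v p q}" unfolding Gamma_edge_iff by blast
  qed
  moreover have "inj_on (\<lambda>e. {fst e, snd e}) (gt_ineqs n)"
    using gt_ineqs_asym by (fastforce intro!: inj_onI simp: doubleton_eq_iff)
  ultimately show ?thesis by (simp add: card_image inj_on_subset)
qed

text \<open>Every inequality between a component of \<open>\<Gamma>\<^sub>v\<close> and the rest is slack at \<open>v\<close>, so a component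
  avoiding the fixed top row can be moved up and down a little.\<close>
lemma GT_shift_component:
  assumes v: "v \<in> GT n lam" and C: "C \<subseteq> gt_idx n - top_row n"
    and closed: "\<And>p q. p \<in> C \<Longrightarrow> Gamma_edge n v p q \<Longrightarrow> q \<in> C"
  obtains \<epsilon> :: real where "0 < \<epsilon>"
    "\<And>\<sigma>. \<sigma> \<in> {-1, 1} \<Longrightarrow> (\<lambda>i j. v i j + \<sigma> * (if (i, j) \<in> C then \<epsilon> else 0)) \<in> GT n lam"
proof -
  define G where "G = (\<lambda>e. entry v (fst e) - entry v (snd e)) ` {e \<in> gt_ineqs n. entry v (fst e) \<noteq> entry v (snd e)}"
  define \<epsilon> where "\<epsilon> = Min (insert 2 G) / 2"
  have "finite G" unfolding G_def using finite_gt_ineqs by simp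
  moreover have G_pos: "0 < g" if "g \<in> G" for g
    using that GT_ineq[OF v] unfolding G_def by fastforce
  ultimately have eps: "0 < \<epsilon>" "\<And>g. g \<in> G \<Longrightarrow> 2 * \<epsilon> \<le> g" unfolding \<epsilon>_def by auto
  show thesis
  proof (rule that[OF eps(1)])
    fix \<sigma> :: real assume \<sigma>: "\<sigma> \<in> {-1, 1}"
    show "(\<lambda>i j. v i j + \<sigma> * (if (i, j) \<in> C then \<epsilon> else 0)) \<in> GT n lam" (is "?x \<in> _")
    proof (rule GT_I)
      show "?x \<in> gt_space n" using GT_zero[OF v] C unfolding gt_space_def by auto
      show "?x 0 j = real_of_int (lam j)" if "1 \<le> j" "j \<le> n" for j
        using GT_top[OF v that] C that by (auto simp: top_row_def gt_idx_iff)
      show "entry ?x (snd e) \<le> entry ?x (fst e)" if e: "e \<in> gt_ineqs n" for e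
      proof (cases "(fst e \<in> C) = (snd e \<in> C)")
        case True
        then show ?thesis using GT_ineq[OF v e] unfolding entry_def by auto
      next
        case False
        then have "entry v (fst e) \<noteq> entry v (snd e)"
          using closed Gamma_edge_sym e unfolding Gamma_edge_iff by (metis prod.collapse)
        then have "2 * \<epsilon> \<le> entry v (fst e) - entry v (snd e)" using e eps(2) unfolding G_def by blast
        then show ?thesis using \<sigma> eps(1) unfolding entry_def by auto
      qed
    qed
  qed
qed

lemma vertex_reaches_top_row:
  assumes vert: "is_vertex (GT n lam) v" and x: "x \<in> gt_idx n"
  shows "\<exists>r\<in>top_row n. (Gamma_edge n v)\<^sup>*\<^sup>* x r"
proof (rule ccontr)
  assume unreachable: "\<not> ?thesis"
  define C where "C = {p. (Gamma_edge n v)\<^sup>*\<^sup>* x p}"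
  have "C \<subseteq> gt_idx n"
    unfolding C_def using x by (auto elim: rtranclp_induct dest: Gamma_edge_idx)
  then have "C \<subseteq> gt_idx n - top_row n" using unreachable unfolding C_def by blast
  moreover have "\<And>p q. p \<in> C \<Longrightarrow> Gamma_edge n v p q \<Longrightarrow> q \<in> C"
    unfolding C_def by (simp add: rtranclp.rtrancl_into_rtrancl)
  moreover have v: "v \<in> GT n lam" using vert unfolding is_vertex_def by blast
  ultimately obtain \<epsilon> :: real where eps: "0 < \<epsilon>"
    "\<And>\<sigma>. \<sigma> \<in> {-1, 1} \<Longrightarrow> (\<lambda>i j. v i j + \<sigma> * (if (i, j) \<in> C then \<epsilon> else 0)) \<in> GT n lam"
    using GT_shift_component by blast
  define shift where "shift = (\<lambda>\<sigma> i j. v i j + \<sigma> * (if (i, j) \<in> C then \<epsilon> else 0))"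
  have "v = (\<lambda>i j. (1 - 1/2) * shift (-1) i j + 1/2 * shift 1 i j)"
    unfolding shift_def by (simp add: algebra_simps)
  moreover have "shift (-1) \<in> GT n lam" "shift 1 \<in> GT n lam"
    using eps(2)[of "-1"] eps(2)[of 1] unfolding shift_def by simp_all
  moreover have "0 < (1/2 :: real)" "(1/2 :: real) < 1" by simp_all
  ultimately have "shift (-1) = shift 1" using vert unfolding is_vertex_def by blast
  then have "shift (-1) (fst x) (snd x) = shift 1 (fst x) (snd x)" by simp
  moreover have "x \<in> C" unfolding C_def by simp
  ultimately show False using eps(1) unfolding shift_def by simp
qed

context regular_weight
begin

lemma top_row_disconnected:
  assumes v: "v \<in> GT n lam" and r: "r \<in> top_row n" "r' \<in> top_row n"
    and path: "(Gamma_edge n v)\<^sup>*\<^sup>* r r'"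
  shows "r = r'"
proof -
  obtain j j' where j: "r = (0, j)" "1 \<le> j" "j \<le> n" and j': "r' = (0, j')" "1 \<le> j'" "j' \<le> n"
    using r unfolding top_row_def by (cases r, cases r') (auto simp: gt_idx_iff)
  have "lam j = lam j'"
    using rtranclp_Gamma_edge_entry[OF path] GT_top[OF v j(2,3)] GT_top[OF v j'(2,3)] j j'
    unfolding entry_def by simp
  then have "j = j'" using lam_strict_antimono j j' by (metis linorder_neqE_nat less_irrefl)
  then show ?thesis using j j' by simp
qed

end

theorem mainTheorem4:
  fixes n :: nat and lam :: "nat \<Rightarrow> int" and v :: "nat \<Rightarrow> nat \<Rightarrow> real"
  assumes regular: "\<forall>j. 1 \<le> j \<and> j < n \<longrightarrow> lam j > lam (j + 1)"
    and vert: "is_vertex (GT n lam) v"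
  shows "simplicial_vertex n (GT n lam) v \<longleftrightarrow> acyclic_graph (Gamma_edge n v) (gt_idx n)"
proof -
  interpret regular_weight n lam using regular by unfold_locales
  have v: "v \<in> GT n lam" using vert unfolding is_vertex_def by blast
  interpret \<Gamma>: rooted_graph "Gamma_edge n v" "gt_idx n" "top_row n"
  proof
    show "top_row n \<subseteq> gt_idx n" unfolding top_row_def by blast
  qed (use finite_gt_idx Gamma_edge_sym Gamma_edge_idx Gamma_edge_irrefl vertex_reaches_top_row[OF vert]
        top_row_disconnected[OF v] in auto)
  have "card (free_idx n) = card (gt_idx n) - card (top_row n)"
    unfolding free_idx_def by (rule card_Diff_subset) (auto simp: top_row_def intro: finite_subset[OF _ finite_gt_idx])
  then show ?thesis
    unfolding simplicial_vertex_def \<Gamma>.acyclic_iff_card_edges \<Gamma>.edges_def card_Gamma_edges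
      card_facets_through[OF v] pdim_GT
    using vert by simp
qed

end
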